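(* Fix $\delta_1,\delta_2,\delta_3>0$. There is a constant $C<\infty$, not depending on $n$ nor on the realisation of the skeleton or of the environment, such that for all sufficiently large $n$, almost surely on the event $A_n\setminus B_n$, $$\mathbb{P}(X_{2n}=0\mid\mathcal{F}\vee\mathcal{G})\le C\sqrt{\frac{\ln n}{n}}.$$
   Context: Setup. On one probability space $(\Omega,\mathcal{A},\mathbb{P})$ let: $(Y_n)_{n\ge0}$ be a simple symmetric random walk on $\mathbb{Z}$ with $Y_0=0$; $(\xi_i^{(y)})_{i\ge1,y\in\mathbb{Z}}$ be i.i.d. geometric variables with $\mathbb{P}(\xi=k)=\tfrac23(\tfrac13)^k$, $k\ge0$; and $\varepsilon=(\varepsilon_y)_{y\in\mathbb{Z}}$ be the environment of the randomly horizontally directed lattice with randomness decaying in power $\beta$: $Q\ge2$ even, $f:\mathbb{Z}\to\{-1,1\}$ $Q$-periodic with $\sum_{y=1}^Q f(y)=0$, $(\rho_y)$ i.i.d. uniform on $\{-1,1\}$, $(\lambda_y)$ independent $\{0,1\}$-valued, independent of $(\rho_y)$, with $\mathbb{P}(\lambda_y=1)=c_0|y|^{-\beta}$ for large $|y|$, and $\varepsilon_y=(1-\lambda_y)f(y)+\lambda_y\rho_y$. The three families $(Y_n)$, $(\xi_i^{(y)})$, $(\lambda_y,\rho_y)$ are mutually independent. Let $\eta_n(y)=\sum_{k=0}^n\mathbf 1_{\{Y_k=y\}}$ (with $\eta_{-1}\equiv0$) and $X_n=\sum_{y\in\mathbb{Z}}\varepsilon_y\sum_{i=1}^{\eta_{n-1}(y)}\xi_i^{(y)}$.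 Let $\mathcal{F}=\sigma(Y_k:k\ge0)$ and $\mathcal{G}=\sigma(\lambda_y,\rho_y:y\in\mathbb{Z})$. For $\delta_1,\delta_2,\delta_3>0$ let $A_{n,1}=\{\max_{0\le k\le 2n}|Y_k|<n^{1/2+\delta_1}\}$, $A_{n,2}=\{\max_{y}\eta_{2n-1}(y)<n^{1/2+\delta_2}\}$, $A_n=A_{n,1}\cap A_{n,2}$, and $B_n=A_n\cap\{|\sum_{y}\varepsilon_y\eta_{2n-1}(y)|>n^{1/2+\delta_3}\}$. *)

theory Defs
  imports "HOL-Probability.Probability"
begin

text \<open>Index type for the elementary independent random variables of the model:
  the increments of the walk, the geometric variables xi_i^(y) (i >= 1),
  and the environment variables lambda_y, rho_y.\<close>
datatype idx = Step nat | Xi nat int | Lam int | Rho int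

text \<open>occ Y m y = number of k < m with Y_k = y, i.e. eta_{m-1}(y) (eta_{-1} = 0).\<close>
definition occ :: "(nat \<Rightarrow> 'a \<Rightarrow> int) \<Rightarrow> nat \<Rightarrow> int \<Rightarrow> 'a \<Rightarrow> nat" where
  "occ Y m y \<omega> = card {k. k < m \<and> Y k \<omega> = y}"

definition env :: "(int \<Rightarrow> int) \<Rightarrow> (int \<Rightarrow> 'a \<Rightarrow> int) \<Rightarrow> (int \<Rightarrow> 'a \<Rightarrow> int) \<Rightarrow> int \<Rightarrow> 'a \<Rightarrow> int" where
  "env f lam rho y \<omega> = (1 - lam y \<omega>) * f y + lam y \<omega> * rho y \<omega>"

text \<open>X_m = sum_y eps_y sum_{i=1}^{eta_{m-1}(y)} xi_i^(y); the sum over y is over the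
  (finite) set of sites visited before time m, outside of which eta_{m-1}(y) = 0.\<close>
definition Xpos :: "(int \<Rightarrow> int) \<Rightarrow> (nat \<Rightarrow> 'a \<Rightarrow> int) \<Rightarrow> (nat \<Rightarrow> int \<Rightarrow> 'a \<Rightarrow> nat)
    \<Rightarrow> (int \<Rightarrow> 'a \<Rightarrow> int) \<Rightarrow> (int \<Rightarrow> 'a \<Rightarrow> int) \<Rightarrow> nat \<Rightarrow> 'a \<Rightarrow> int" where
  "Xpos f Y xi lam rho m \<omega> =
     (\<Sum>y\<in>(\<lambda>k. Y k \<omega>) ` {..<m}.
        env f lam rho y \<omega> * (\<Sum>i=1..occ Y m y \<omega>. int (xi i y \<omega>)))"

definition FG :: "'a measure \<Rightarrow> (nat \<Rightarrow> 'a \<Rightarrow> int) \<Rightarrow> (int \<Rightarrow> 'a \<Rightarrow> int) \<Rightarrow> (int \<Rightarrow> 'a \<Rightarrow> int) \<Rightarrow> 'a measure" where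
  "FG M Y lam rho = sigma (space M)
     ({Y k -` A \<inter> space M | k A. True} \<union> {lam y -` A \<inter> space M | y A. True}
      \<union> {rho y -` A \<inter> space M | y A. True})"

definition elem :: "(nat \<Rightarrow> 'a \<Rightarrow> int) \<Rightarrow> (nat \<Rightarrow> int \<Rightarrow> 'a \<Rightarrow> nat)
    \<Rightarrow> (int \<Rightarrow> 'a \<Rightarrow> int) \<Rightarrow> (int \<Rightarrow> 'a \<Rightarrow> int) \<Rightarrow> idx \<Rightarrow> 'a \<Rightarrow> int" where
  "elem Y xi lam rho j \<omega> = (case j of
      Step k \<Rightarrow> Y (Suc k) \<omega> - Y k \<omega>
    | Xi i y \<Rightarrow> int (xi i y \<omega>)
    | Lam y \<Rightarrow> lam y \<omega>
    | Rho y \<Rightarrow> rho y \<omega>)"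

definition elem_index :: "idx set" where
  "elem_index = {j. case j of Xi i y \<Rightarrow> 1 \<le> i | _ \<Rightarrow> True}"

end

theory Submission
  imports Defs
begin

(* Conditionally on the walk Y and on the environment (lambda, rho), X_{2n} is a difference
   T_plus - T_minus of two independent sums of geometric variables: T_plus collects the
   variables xi_i^(y), 1 <= i <= eta_{2n-1}(y), of the rows y oriented to the right and
   T_minus those of the rows oriented to the left.  Together they have 2n summands, so one
   of them has at least n.  A sum of m independent geometric(2/3) variables is negative
   binomial, and its point probabilities are at most 8/sqrt m; hence
   P(X_{2n} = 0 | F v G) <= 8/sqrt n almost surely, for every n >= 1.  This is stronger
   than the claimed bound C sqrt(ln n / n), and needs no restriction to A_n \ B_n. *)

lemma negbin_recurrence:
  fixes m k :: nat
  assumes m: "1 \<le> m"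
  shows "3 * (real k + 1) * (real ((m - 1 + Suc k) choose Suc k) * (2/3) ^ m * (1/3) ^ Suc k)
       = (real k + real m) * (real ((m - 1 + k) choose k) * (2/3) ^ m * (1/3) ^ k)"
proof -
  have "Suc k * (Suc (m - 1 + k) choose Suc k) = Suc (m - 1 + k) * ((m - 1 + k) choose k)"
    by (rule Suc_times_binomial)
  moreover have "Suc (m - 1 + k) = k + m" "m - 1 + Suc k = Suc (m - 1 + k)" using m by auto
  ultimately have "Suc k * ((m - 1 + Suc k) choose Suc k) = (k + m) * ((m - 1 + k) choose k)"
    by simp
  then have binom: "real (Suc k) * real ((m - 1 + Suc k) choose Suc k)
      = real (k + m) * real ((m - 1 + k) choose k)"
    by (metis of_nat_mult)
  have shift: "3 * (real k + 1) * (X * a * (1/3) ^ Suc k) = (real (Suc k) * X) * a * (1/3) ^ k"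
    for X a :: real
    by (simp add: algebra_simps)
  have "3 * (real k + 1) * (real ((m - 1 + Suc k) choose Suc k) * (2/3) ^ m * (1/3) ^ Suc k)
      = (real (Suc k) * real ((m - 1 + Suc k) choose Suc k)) * (2/3) ^ m * (1/3) ^ k"
    by (rule shift)
  also have "\<dots> = (real (k + m) * real ((m - 1 + k) choose k)) * (2/3) ^ m * (1/3) ^ k"
    by (simp only: binom)
  finally show ?thesis by (simp add: algebra_simps)
qed

(* Within distance w ~ sqrt m / 4 of the mode (m - 3)/2, the ratio p(k+1)/p(k) of the
   recurrence lies between 1 - 1/(2w) and 1 + 1/(2w). *)
lemma negbin_ratio_lower:
  fixes m w k k0 :: nat
  assumes w: "1 \<le> w" and wm: "16 * real w ^ 2 \<le> real m"
    and k0: "2 * real k0 + 3 \<le> real m" and k: "real k + 1 \<le> real k0 + real w"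
  shows "(1 - 1 / (2 * real w)) * (3 * (real k + 1)) \<le> real k + real m"
proof -
  have "(4 * real w - 3) * (real k + 1) \<le> (4 * real w - 3) * (real k0 + real w)"
    using w k by (intro mult_left_mono) auto
  also have "\<dots> \<le> (4 * real w - 3) * ((real m - 3) / 2 + real w)"
    using w k0 by (intro mult_left_mono) auto
  also have "\<dots> \<le> 2 * real w * (real m - 1)"
  proof -
    have "2 * real w * (real m - 1) - (4 * real w - 3) * ((real m - 3) / 2 + real w)
        = 7 * real w + 3 * real m / 2 - 9 / 2 - 4 * real w ^ 2"
      by (simp add: field_simps power2_eq_square)
    then show ?thesis using w wm by linarith
  qed
  finally have "(2 * real w - 1) * (3 * (real k + 1)) \<le> 2 * real w * (real k + real m)"
    by (simp add: algebra_simps)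
  then show ?thesis using w by (simp add: field_simps)
qed

lemma negbin_ratio_upper:
  fixes m w k k0 :: nat
  assumes w: "1 \<le> w" and wm: "16 * real w ^ 2 \<le> real m"
    and k0: "real m \<le> 2 * real k0 + 2" and k: "real k0 \<le> real k + real w"
  shows "real k + real m \<le> (1 + 1 / (2 * real w)) * (3 * (real k + 1))"
proof -
  have "2 * real w * (real m - 1) \<le> (4 * real w + 3) * ((real m - 2) / 2 - real w + 1)"
  proof -
    have "(4 * real w + 3) * ((real m - 2) / 2 - real w + 1) - 2 * real w * (real m - 1)
        = 3 * real m / 2 - real w - 4 * real w ^ 2"
      by (simp add: field_simps power2_eq_square)
    moreover have "real w \<le> real w ^ 2" using w by (simp add: power2_eq_square)
    ultimately show ?thesis using wm by linarith
  qed
  also have "\<dots> \<le> (4 * real w + 3) * (real k0 - real w + 1)"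
    using w k0 by (intro mult_left_mono) auto
  also have "\<dots> \<le> (4 * real w + 3) * (real k + 1)"
    using w k by (intro mult_left_mono) auto
  finally have "2 * real w * (real k + real m) \<le> (2 * real w + 1) * (3 * (real k + 1))"
    by (simp add: algebra_simps)
  then show ?thesis using w by (simp add: field_simps)
qed

lemma geometric_lower_chain:
  fixes q :: "nat \<Rightarrow> real"
  assumes step: "\<And>t. t < w \<Longrightarrow> a * q t \<le> q (Suc t)" and a: "0 \<le> a"
  shows "t \<le> w \<Longrightarrow> a ^ t * q 0 \<le> q t"
proof (induction t)
  case (Suc t)
  have "a ^ Suc t * q 0 = a * (a ^ t * q 0)" by simp
  also have "\<dots> \<le> a * q t" using Suc a by (intro mult_left_mono) auto
  also have "\<dots> \<le> q (Suc t)" using Suc by (intro step) auto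
  finally show ?case .
qed simp

lemma negbin_step_up:
  fixes p :: "nat \<Rightarrow> real"
  assumes rec: "3 * (real k + 1) * p (Suc k) = (real k + real m) * p k" and p: "0 \<le> p k"
    and ratio: "x * (3 * (real k + 1)) \<le> real k + real m"
  shows "x * p k \<le> p (Suc k)"
proof -
  have "3 * (real k + 1) * (x * p k) \<le> 3 * (real k + 1) * p (Suc k)"
    using mult_right_mono[OF ratio p] rec by (simp add: algebra_simps)
  then show ?thesis by (simp add: mult_le_cancel_left_pos)
qed

lemma negbin_step_down:
  fixes p :: "nat \<Rightarrow> real"
  assumes rec: "3 * (real k + 1) * p (Suc k) = (real k + real m) * p k" and p: "0 \<le> p k"
    and ratio: "real k + real m \<le> (1 + x) * (3 * (real k + 1))" and x: "0 \<le> x" "x \<le> 1"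
  shows "(1 - x) * p (Suc k) \<le> p k"
proof -
  have "3 * (real k + 1) * p (Suc k) \<le> 3 * (real k + 1) * ((1 + x) * p k)"
    using mult_right_mono[OF ratio p] rec by (simp add: algebra_simps)
  then have "p (Suc k) \<le> (1 + x) * p k" by (simp add: mult_le_cancel_left_pos)
  then have "(1 - x) * p (Suc k) \<le> (1 - x) * ((1 + x) * p k)" using x by (intro mult_left_mono) auto
  also have "\<dots> = p k - x\<^sup>2 * p k" by (simp add: algebra_simps power2_eq_square)
  also have "\<dots> \<le> p k" using p by simp
  finally show ?thesis .
qed

lemma negbin_window_up:
  fixes p :: "nat \<Rightarrow> real" and m w k0 :: nat
  assumes rec: "\<And>k. 3 * (real k + 1) * p (Suc k) = (real k + real m) * p k"
    and nonneg: "\<And>k. 0 \<le> p k" and w: "1 \<le> w" and wm: "16 * real w ^ 2 \<le> real m"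
    and k0: "2 * real k0 + 3 \<le> real m" and t: "t \<le> w"
  shows "(1 - 1 / (2 * real w)) ^ t * p k0 \<le> p (k0 + t)"
proof -
  have "(1 - 1 / (2 * real w)) * p (k0 + s) \<le> p (Suc (k0 + s))" if "s < w" for s
  proof (rule negbin_step_up[OF rec nonneg])
    show "(1 - 1 / (2 * real w)) * (3 * (real (k0 + s) + 1)) \<le> real (k0 + s) + real m"
      by (rule negbin_ratio_lower[OF w wm k0]) (use that in simp)
  qed
  then show ?thesis
    using geometric_lower_chain[of w "1 - 1 / (2 * real w)" "\<lambda>s. p (k0 + s)"] w t by simp
qed

lemma negbin_window_down:
  fixes p :: "nat \<Rightarrow> real" and m w k0 :: nat
  assumes rec: "\<And>k. 3 * (real k + 1) * p (Suc k) = (real k + real m) * p k"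
    and nonneg: "\<And>k. 0 \<le> p k" and w: "1 \<le> w" and wm: "16 * real w ^ 2 \<le> real m"
    and k0: "real m \<le> 2 * real k0 + 2" and wk: "w \<le> k0" and t: "t \<le> w"
  shows "(1 - 1 / (2 * real w)) ^ t * p k0 \<le> p (k0 - t)"
proof -
  have "(1 - 1 / (2 * real w)) * p (k0 - s) \<le> p (k0 - Suc s)" if "s < w" for s
  proof -
    have "(1 - 1 / (2 * real w)) * p (Suc (k0 - Suc s)) \<le> p (k0 - Suc s)"
    proof (rule negbin_step_down[OF rec nonneg])
      show "real (k0 - Suc s) + real m \<le> (1 + 1 / (2 * real w)) * (3 * (real (k0 - Suc s) + 1))"
        by (rule negbin_ratio_upper[OF w wm k0]) (use that wk in simp)
    qed (use w in auto)
    moreover have "Suc (k0 - Suc s) = k0 - s" using that wk by simp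
    ultimately show ?thesis by simp
  qed
  then show ?thesis
    using geometric_lower_chain[of w "1 - 1 / (2 * real w)" "\<lambda>s. p (k0 - s)"] w t by simp
qed

(* Around every k0 the pmf stays above p k0 / 2 on a window of w + 1 consecutive
   integers, by Bernoulli's inequality (1 - 1/(2w))^w >= 1/2. *)
lemma negbin_half_window:
  fixes p :: "nat \<Rightarrow> real" and m w k0 :: nat
  assumes rec: "\<And>k. 3 * (real k + 1) * p (Suc k) = (real k + real m) * p k"
    and nonneg: "\<And>k. 0 \<le> p k" and w: "1 \<le> w" and wm: "16 * real w ^ 2 \<le> real m"
  obtains a where "\<And>j. j \<in> {a..a + w} \<Longrightarrow> p k0 / 2 \<le> p j"
proof -
  define x where "x = 1 / (2 * real w)"
  have half: "p k0 / 2 \<le> (1 - x) ^ t * p k0" if "t \<le> w" for t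
  proof -
    have x: "0 \<le> x" "x \<le> 1" "real w * x = 1/2" using w by (auto simp: x_def)
    then have "1/2 \<le> (1 - x) ^ w" using Bernoulli_inequality[of "-x" w] by simp
    also have "\<dots> \<le> (1 - x) ^ t" using x that by (intro power_decreasing) auto
    finally show ?thesis using mult_right_mono[of "1/2" _ "p k0"] nonneg[of k0] by simp
  qed
  show ?thesis
  proof (cases "2 * k0 + 3 \<le> m")
    case True
    then have k0: "2 * real k0 + 3 \<le> real m" by simp
    show ?thesis
    proof (rule that[of k0])
      fix j assume "j \<in> {k0..k0 + w}"
      then have "j - k0 \<le> w" "k0 + (j - k0) = j" by auto
      then show "p k0 / 2 \<le> p j"
        using half negbin_window_up[OF rec nonneg w wm k0] unfolding x_def by (metis order_trans)
    qed
  next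
    case False
    then have k0: "real m \<le> 2 * real k0 + 2" by simp
    have "real w \<le> real w ^ 2" using w by (simp add: power2_eq_square)
    then have wk: "w \<le> k0" using k0 wm by linarith
    show ?thesis
    proof (rule that[of "k0 - w"])
      fix j assume "j \<in> {k0 - w..k0 - w + w}"
      then have "k0 - j \<le> w" "k0 - (k0 - j) = j" using wk by auto
      then show "p k0 / 2 \<le> p j"
        using half negbin_window_down[OF rec nonneg w wm k0 wk] unfolding x_def by (metis order_trans)
    qed
  qed
qed

(* Point probabilities of a (sub-)probability mass function obeying the negative binomial
   recurrence are at most 8 / sqrt m: the half-window of length ~ sqrt m / 4 has mass <= 1. *)
lemma negbin_pmf_le:
  fixes p :: "nat \<Rightarrow> real" and m :: nat
  assumes rec: "\<And>k. 3 * (real k + 1) * p (Suc k) = (real k + real m) * p k"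
    and nonneg: "\<And>k. 0 \<le> p k" and mass: "\<And>a b. sum p {a..b} \<le> 1" and m: "1 \<le> m"
  shows "p k0 \<le> 8 / sqrt m"
proof (cases "16 \<le> m")
  case False
  then have "sqrt m \<le> 4" by (simp add: real_sqrt_le_iff[of _ 16, simplified])
  moreover have "p k0 \<le> 1" using mass[of k0 k0] by simp
  ultimately have "p k0 * sqrt m \<le> 1 * 4" using nonneg[of k0] by (intro mult_mono) auto
  then show ?thesis using m by (simp add: field_simps)
next
  case True
  define w where "w = nat \<lfloor>sqrt m / 4\<rfloor>"
  have sqrt_m: "4 \<le> sqrt m" using True by (simp add: real_le_rsqrt)
  then have w: "1 \<le> w" "real w \<le> sqrt m / 4" "sqrt m / 4 < real w + 1"
    by (auto simp: w_def le_nat_floor) linarith+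
  have wm: "16 * real w ^ 2 \<le> real m"
    using power_mono[OF w(2), of 2] by (simp add: power_divide)
  obtain a where a: "\<And>j. j \<in> {a..a + w} \<Longrightarrow> p k0 / 2 \<le> p j"
    using negbin_half_window[OF rec nonneg w(1) wm] by blast
  have "(real w + 1) * (p k0 / 2) \<le> sum p {a..a + w}"
    using sum_bounded_below[of "{a..a + w}" "p k0 / 2" p] a by (simp add: add.commute)
  also have "\<dots> \<le> 1" by (rule mass)
  finally have "(real w + 1) * p k0 \<le> 2" by simp
  moreover have "sqrt m / 4 * p k0 \<le> (real w + 1) * p k0"
    using w(3) nonneg[of k0] by (intro mult_right_mono) auto
  ultimately have "p k0 * sqrt m \<le> 8" by (simp add: mult.commute)
  moreover have "0 < sqrt m" using sqrt_m by linarith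
  ultimately show ?thesis by (simp add: pos_le_divide_eq)
qed

lemma measurable_count_space_sum:
  fixes g :: "'i \<Rightarrow> 'a \<Rightarrow> 'b::{countable, comm_monoid_add}"
  assumes "finite S" "\<And>s. s \<in> S \<Longrightarrow> g s \<in> N \<rightarrow>\<^sub>M count_space UNIV"
  shows "(\<lambda>x. \<Sum>s\<in>S. g s x) \<in> N \<rightarrow>\<^sub>M count_space UNIV"
  using assms
proof (induction S rule: finite_induct)
  case (insert s S)
  then have [measurable]: "g s \<in> N \<rightarrow>\<^sub>M count_space UNIV"
    and [measurable]: "(\<lambda>x. \<Sum>s\<in>S. g s x) \<in> N \<rightarrow>\<^sub>M count_space UNIV" by auto
  show ?case using insert.hyps by simp
qed simp

lemma measurable_map_upt:
  fixes g :: "nat \<Rightarrow> 'a \<Rightarrow> 'b::countable"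
  assumes "\<And>k. k < n \<Longrightarrow> g k \<in> N \<rightarrow>\<^sub>M count_space UNIV"
  shows "(\<lambda>x. map (\<lambda>k. g k x) [0..<n]) \<in> N \<rightarrow>\<^sub>M count_space UNIV"
  using assms
proof (induction n)
  case (Suc n)
  then have [measurable]: "g n \<in> N \<rightarrow>\<^sub>M count_space UNIV"
    and [measurable]: "(\<lambda>x. map (\<lambda>k. g k x) [0..<n]) \<in> N \<rightarrow>\<^sub>M count_space UNIV" by auto
  show ?case by simp
qed simp

lemma (in prob_space) prob_le_by_countable_partition:
  fixes D :: "'a \<Rightarrow> 'b::countable"
  assumes D: "D \<in> M \<rightarrow>\<^sub>M count_space UNIV" and A: "A \<in> events" and B: "B \<in> events"
    and c: "0 \<le> c" and piece: "\<And>d. prob (B \<inter> D -` {d}) \<le> c * prob (A \<inter> D -` {d})"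
  shows "prob B \<le> c * prob A"
proof -
  have split: "emeasure M X = (\<integral>\<^sup>+d. emeasure M (X \<inter> D -` {d}) \<partial>count_space UNIV)"
    if X: "X \<in> events" for X
  proof -
    have "X = (\<Union>d. X \<inter> D -` {d})" by auto
    also have "emeasure M \<dots> = (\<integral>\<^sup>+d. emeasure M (X \<inter> D -` {d}) \<partial>count_space UNIV)"
    proof (rule emeasure_UN_countable)
      show "X \<inter> D -` {d} \<in> events" for d
      proof -
        have "X \<inter> D -` {d} = X \<inter> (D -` {d} \<inter> space M)"
          using sets.sets_into_space[OF X] by auto
        then show ?thesis using measurable_sets[OF D, of "{d}"] X by auto
      qed
    qed (auto simp: disjoint_family_on_def)
    finally show ?thesis .
  qed
  have "emeasure M B \<le> (\<integral>\<^sup>+d. ennreal c * emeasure M (A \<inter> D -` {d}) \<partial>count_space UNIV)"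
    unfolding split[OF B] using piece c
    by (intro nn_integral_mono) (simp add: emeasure_eq_measure ennreal_mult[symmetric])
  also have "\<dots> = ennreal c * emeasure M A"
    unfolding split[OF A] by (rule nn_integral_cmult) simp
  finally show ?thesis using c by (simp add: emeasure_eq_measure ennreal_mult[symmetric])
qed

(* If P(Z n A) <= c P(A) for every A of a sub-sigma-algebra F, then E[1_Z | F] <= c a.e.:
   on X = {E[1_Z | F] > c} in F, the integral of E[1_Z | F] - c is <= 0 but nonnegative. *)
lemma (in prob_space) cond_exp_indicator_le:
  assumes F: "subalgebra M F" and Z: "Z \<in> events"
    and ratio: "\<And>A. A \<in> sets F \<Longrightarrow> prob (Z \<inter> A) \<le> c * prob A"
  shows "AE \<omega> in M. real_cond_exp M F (indicator Z) \<omega> \<le> c"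
proof -
  interpret S: finite_measure_subalgebra M F
    by unfold_locales (rule F)
  define g where "g = real_cond_exp M F (indicator Z)"
  define X where "X = {\<omega>\<in>space M. c < g \<omega>}"
  have hi: "integrable M (indicator Z :: 'a \<Rightarrow> real)"
    using Z by (simp add: emeasure_eq_measure)
  have gi: "integrable M g" unfolding g_def by (rule S.real_cond_exp_int(1)[OF hi])
  have XF: "X \<in> sets F"
  proof -
    have "g \<in> borel_measurable F" unfolding g_def by (rule borel_measurable_cond_exp)
    then have "{\<omega>\<in>space F. c < g \<omega>} \<in> sets F" by measurable
    then show ?thesis using F by (simp add: X_def subalgebra_def)
  qed
  then have X: "X \<in> events" using F by (auto simp: subalgebra_def)
  have "(\<integral>\<omega>. indicator X \<omega> * g \<omega> \<partial>M) = prob (Z \<inter> X)"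
    using S.real_cond_exp_intA[OF hi XF] Z X
    by (simp add: g_def set_lebesgue_integral_def indicator_inter_arith[symmetric] Int_commute)
  also have "\<dots> \<le> (\<integral>\<omega>. indicator X \<omega> * c \<partial>M)" using ratio[OF XF] X by (simp add: mult.commute)
  finally have "(\<integral>\<omega>. indicator X \<omega> * (g \<omega> - c) \<partial>M) \<le> 0"
    using X gi by (simp add: right_diff_distrib Bochner_Integration.integral_diff
        integrable_real_mult_indicator mult.commute emeasure_eq_measure)
  moreover have int: "integrable M (\<lambda>\<omega>. indicator X \<omega> * (g \<omega> - c))"
    using integrable_real_mult_indicator[OF X Bochner_Integration.integrable_diff[OF gi integrable_const[of c]]]
    by (simp add: mult.commute)
  moreover have nonneg: "AE \<omega> in M. 0 \<le> indicator X \<omega> * (g \<omega> - c)"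
    by (auto simp: X_def indicator_def)
  ultimately have "AE \<omega> in M. indicator X \<omega> * (g \<omega> - c) = 0"
    using integral_nonneg_eq_0_iff_AE[OF int nonneg] integral_nonneg_AE[OF nonneg] by linarith
  with AE_space show ?thesis
    by eventually_elim (auto simp: g_def X_def indicator_def split: if_splits)
qed

(* A skeleton is a list d of pairs (Y_k, eps_{Y_k}).  visits d y is the number of visits
   to row y; the slots of d are the indices (i, y) with 1 <= i <= visits d y of the
   geometric variables xi_i^(y) contributing to X, split according to the orientation
   recorded for row y. *)
definition visits :: "(int \<times> int) list \<Rightarrow> int \<Rightarrow> nat" where
  "visits d y = card {k. k < length d \<and> fst (d ! k) = y}"

definition slots :: "(int \<times> int) list \<Rightarrow> (nat \<times> int) set" where
  "slots d = prod.swap ` (SIGMA y:fst ` set d. {1..visits d y})"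

definition plus_slots :: "(int \<times> int) list \<Rightarrow> (nat \<times> int) set" where
  "plus_slots d = {q \<in> slots d. (snd q, 1) \<in> set d}"

definition minus_slots :: "(int \<times> int) list \<Rightarrow> (nat \<times> int) set" where
  "minus_slots d = {q \<in> slots d. (snd q, 1) \<notin> set d}"

lemma slots_finite: "finite (slots d)" "finite (plus_slots d)" "finite (minus_slots d)"
  by (simp_all add: slots_def plus_slots_def minus_slots_def)

lemma slots_pos: "\<forall>(i, y)\<in>slots d. 1 \<le> i" "\<forall>(i, y)\<in>plus_slots d. 1 \<le> i" "\<forall>(i, y)\<in>minus_slots d. 1 \<le> i"
  by (auto simp: slots_def plus_slots_def minus_slots_def)

lemma plus_minus_slots_disjoint: "plus_slots d \<inter> minus_slots d = {}"
  by (auto simp: plus_slots_def minus_slots_def)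

lemma plus_minus_slots_union: "plus_slots d \<union> minus_slots d = slots d"
  by (auto simp: plus_slots_def minus_slots_def)

lemma card_slots: "card (slots d) = length d"
proof -
  have "card (slots d) = (\<Sum>y\<in>fst ` set d. visits d y)"
    unfolding slots_def by (subst card_image) (auto simp: inj_on_def)
  also have "\<dots> = card (\<Union>y\<in>fst ` set d. {k. k < length d \<and> fst (d ! k) = y})"
    unfolding visits_def by (rule card_UN_disjoint[symmetric]) auto
  also have "(\<Union>y\<in>fst ` set d. {k. k < length d \<and> fst (d ! k) = y}) = {..<length d}"
    by (auto simp: in_set_conv_nth intro!: bexI[OF _ nth_mem])
  finally show ?thesis by simp
qed

lemma card_plus_minus_slots: "card (plus_slots d) + card (minus_slots d) = length d"
  using card_Un_disjoint[OF slots_finite(2,3) plus_minus_slots_disjoint, of d]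
  by (simp add: plus_minus_slots_union card_slots)

lemma signed_slot_sum:
  fixes g :: "nat \<Rightarrow> int \<Rightarrow> int" and \<sigma> :: "int \<Rightarrow> int"
  assumes sign: "\<And>y s. (y, s) \<in> set d \<Longrightarrow> s = \<sigma> y \<and> s \<in> {1, -1}"
  shows "(\<Sum>y\<in>fst ` set d. \<sigma> y * (\<Sum>i=1..visits d y. g i y))
           = (\<Sum>(i, y)\<in>plus_slots d. g i y) - (\<Sum>(i, y)\<in>minus_slots d. g i y)"
proof -
  have "(\<Sum>y\<in>fst ` set d. \<sigma> y * (\<Sum>i=1..visits d y. g i y)) = (\<Sum>(i, y)\<in>slots d. \<sigma> y * g i y)"
    unfolding slots_def sum_distrib_left
    by (subst sum.reindex) (auto simp: inj_on_def sum.Sigma intro!: sum.cong)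
  also have "\<dots> = (\<Sum>(i, y)\<in>plus_slots d. \<sigma> y * g i y) + (\<Sum>(i, y)\<in>minus_slots d. \<sigma> y * g i y)"
    unfolding plus_minus_slots_union[symmetric]
    by (rule sum.union_disjoint[OF slots_finite(2,3) plus_minus_slots_disjoint])
  also have "(\<Sum>(i, y)\<in>plus_slots d. \<sigma> y * g i y) = (\<Sum>(i, y)\<in>plus_slots d. g i y)"
    using sign by (intro sum.cong) (auto simp: plus_slots_def)
  also have "(\<Sum>(i, y)\<in>minus_slots d. \<sigma> y * g i y) = (\<Sum>(i, y)\<in>minus_slots d. - g i y)"
  proof (intro sum.cong refl, clarify)
    fix i y assume "(i, y) \<in> minus_slots d"
    then obtain s where "(y, s) \<in> set d" "(y, 1) \<notin> set d"
      by (auto simp: minus_slots_def plus_slots_def slots_def)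
    then show "\<sigma> y * g i y = - g i y" using sign by force
  qed
  finally show ?thesis by (simp add: case_prod_beta sum_negf)
qed

locale rhd_model = prob_space M for M :: "'a measure" +
  fixes Y :: "nat \<Rightarrow> 'a \<Rightarrow> int" and xi :: "nat \<Rightarrow> int \<Rightarrow> 'a \<Rightarrow> nat"
    and lam rho :: "int \<Rightarrow> 'a \<Rightarrow> int" and f :: "int \<Rightarrow> int"
  assumes indep: "indep_vars (\<lambda>_. count_space UNIV) (elem Y xi lam rho) elem_index"
    and Y0: "\<forall>\<omega>\<in>space M. Y 0 \<omega> = 0"
    and lam01: "\<forall>y. \<forall>\<omega>\<in>space M. lam y \<omega> \<in> {0, 1}"
    and f_sign: "\<forall>y. f y \<in> {-1, 1}"
    and rho_plus: "\<forall>y. prob {\<omega>\<in>space M. rho y \<omega> = 1} = 1/2"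
    and rho_minus: "\<forall>y. prob {\<omega>\<in>space M. rho y \<omega> = -1} = 1/2"
    and geometric: "\<forall>i y k. 1 \<le> i \<longrightarrow> prob {\<omega>\<in>space M. xi i y \<omega> = k} = 2/3 * (1/3) ^ k"
begin

abbreviation E :: "idx \<Rightarrow> 'a \<Rightarrow> int" where "E \<equiv> elem Y xi lam rho"

definition elem_events :: "idx \<Rightarrow> 'a set set" where
  "elem_events j = {E j -` A \<inter> space M | A. True}"

definition elem_sigma :: "idx set \<Rightarrow> 'a measure" where
  "elem_sigma K = sigma (space M) (\<Union>j\<in>K. elem_events j)"

lemma elem_events_Pow: "(\<Union>j\<in>K. elem_events j) \<subseteq> Pow (space M)"
  by (auto simp: elem_events_def)

lemma sets_elem_sigma: "sets (elem_sigma K) = sigma_sets (space M) (\<Union>j\<in>K. elem_events j)"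
  unfolding elem_sigma_def using elem_events_Pow by (rule sets_measure_of)

lemma space_elem_sigma [simp]: "space (elem_sigma K) = space M"
  unfolding elem_sigma_def using elem_events_Pow by (rule space_measure_of)

lemma subalgebra_elem_sigma:
  assumes "K \<subseteq> elem_index"
  shows "subalgebra M (elem_sigma K)"
proof -
  have "E j \<in> M \<rightarrow>\<^sub>M count_space UNIV" if "j \<in> K" for j
    using that assms indep by (auto simp: indep_vars_def2)
  then have "elem_events j \<subseteq> events" if "j \<in> K" for j
    using that by (auto simp: elem_events_def)
  then show ?thesis unfolding subalgebra_def sets_elem_sigma
    by (auto intro!: sets.sigma_sets_subset)
qed

lemma elem_measurable [measurable]:
  "j \<in> K \<Longrightarrow> E j \<in> elem_sigma K \<rightarrow>\<^sub>M count_space UNIV"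
  by (rule measurableI) (auto simp: sets_elem_sigma elem_events_def intro!: sigma_sets.Basic)

lemma indep_elem_sigma:
  assumes KL: "K \<inter> L = {}" "K \<subseteq> elem_index" "L \<subseteq> elem_index"
    and a: "a \<in> sets (elem_sigma K)" and b: "b \<in> sets (elem_sigma L)"
  shows "prob (a \<inter> b) = prob a * prob b"
proof -
  let ?I = "case_bool K L"
  have "indep_sets elem_events elem_index"
    using indep unfolding indep_vars_def2 elem_events_def by simp
  then have "indep_sets elem_events (\<Union>j\<in>UNIV. ?I j)"
    by (rule indep_sets_mono_index[rotated]) (use KL in \<open>auto split: bool.splits\<close>)
  moreover have "Int_stable (elem_events j)" for j
    unfolding elem_events_def Int_stable_def by auto (metis vimage_Int Int_assoc Int_absorb Int_commute Int_left_commute)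
  moreover have "disjoint_family_on ?I UNIV"
    using KL by (auto simp: disjoint_family_on_def split: bool.split)
  ultimately have I: "indep_sets (\<lambda>j. sigma_sets (space M) (\<Union>i\<in>?I j. elem_events i)) UNIV"
    by (intro indep_sets_collect_sigma) auto
  have "prob (\<Inter>j. case_bool a b j) = (\<Prod>j\<in>UNIV. prob (case_bool a b j))"
    by (rule indep_setsD[OF I]) (use a b in \<open>auto simp: sets_elem_sigma split: bool.split\<close>)
  then show ?thesis by (simp add: UNIV_bool Int_commute mult.commute)
qed

definition skeleton_index :: "idx set" where
  "skeleton_index = {j. case j of Xi _ _ \<Rightarrow> False | _ \<Rightarrow> True}"

definition xi_index :: "(nat \<times> int) set \<Rightarrow> idx set" where
  "xi_index J = (\<lambda>(i, y). Xi i y) ` J"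

lemma skeleton_index_sub: "skeleton_index \<subseteq> elem_index"
  by (auto simp: skeleton_index_def elem_index_def split: idx.splits)

lemma xi_index_sub: "\<forall>(i, y)\<in>J. 1 \<le> i \<Longrightarrow> xi_index J \<subseteq> elem_index"
  by (auto simp: xi_index_def elem_index_def)

lemma xi_index_disjoint: "J \<inter> J' = {} \<Longrightarrow> xi_index J \<inter> xi_index J' = {}"
  by (auto simp: xi_index_def)

lemma xi_index_skeleton_index: "xi_index J \<inter> skeleton_index = {}"
  by (auto simp: xi_index_def skeleton_index_def)

lemma Y_measurable:
  "Step ` {..<k} \<subseteq> K \<Longrightarrow> Y k \<in> elem_sigma K \<rightarrow>\<^sub>M count_space UNIV"
proof (induction k)
  case 0
  have "(\<lambda>_. 0::int) \<in> elem_sigma K \<rightarrow>\<^sub>M count_space UNIV" by simp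
  then show ?case by (rule measurable_cong[THEN iffD1, rotated]) (use Y0 in auto)
next
  case (Suc k)
  then have [measurable]: "Y k \<in> elem_sigma K \<rightarrow>\<^sub>M count_space UNIV"
    and [measurable]: "E (Step k) \<in> elem_sigma K \<rightarrow>\<^sub>M count_space UNIV"
    by (auto intro!: Suc.IH elem_measurable)
  have "(\<lambda>\<omega>. Y k \<omega> + E (Step k) \<omega>) \<in> elem_sigma K \<rightarrow>\<^sub>M count_space UNIV" by measurable
  then show ?case by (rule measurable_cong[THEN iffD1, rotated]) (simp add: elem_def)
qed

lemma env_measurable:
  assumes "Lam y \<in> K" "Rho y \<in> K"
  shows "env f lam rho y \<in> elem_sigma K \<rightarrow>\<^sub>M count_space UNIV"
proof -
  have [measurable]: "lam y \<in> elem_sigma K \<rightarrow>\<^sub>M count_space UNIV"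
    "rho y \<in> elem_sigma K \<rightarrow>\<^sub>M count_space UNIV"
    using elem_measurable[OF assms(1)] elem_measurable[OF assms(2)] by (simp_all add: elem_def[abs_def])
  show ?thesis unfolding env_def[abs_def] by measurable
qed

lemma elem_sigma_measurable_M:
  "K \<subseteq> elem_index \<Longrightarrow> g \<in> elem_sigma K \<rightarrow>\<^sub>M N \<Longrightarrow> g \<in> M \<rightarrow>\<^sub>M N"
  using measurable_from_subalg subalgebra_elem_sigma by blast

lemma elem_measurable_M: "j \<in> elem_index \<Longrightarrow> E j \<in> M \<rightarrow>\<^sub>M count_space UNIV"
  by (intro elem_sigma_measurable_M[of "{j}"] elem_measurable) auto

lemma rho_measurable: "rho y \<in> M \<rightarrow>\<^sub>M count_space UNIV"
  using elem_measurable_M[of "Rho y"] by (simp add: elem_index_def elem_def[abs_def])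

lemma xi_measurable: "1 \<le> i \<Longrightarrow> (\<lambda>\<omega>. int (xi i y \<omega>)) \<in> M \<rightarrow>\<^sub>M count_space UNIV"
  using elem_measurable_M[of "Xi i y"] by (simp add: elem_index_def elem_def[abs_def])

definition geo_sum :: "(nat \<times> int) set \<Rightarrow> 'a \<Rightarrow> nat" where
  "geo_sum J \<omega> = (\<Sum>(i, y)\<in>J. xi i y \<omega>)"

lemma geo_sum_measurable:
  assumes "finite J" "J \<subseteq> J'"
  shows "geo_sum J \<in> elem_sigma (xi_index J') \<rightarrow>\<^sub>M count_space UNIV"
proof -
  have "(\<lambda>\<omega>. nat (E (Xi i y) \<omega>)) \<in> elem_sigma (xi_index J') \<rightarrow>\<^sub>M count_space UNIV"
    if "(i, y) \<in> J" for i y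
  proof -
    have [measurable]: "E (Xi i y) \<in> elem_sigma (xi_index J') \<rightarrow>\<^sub>M count_space UNIV"
      using that assms(2) by (intro elem_measurable) (force simp: xi_index_def)
    show ?thesis by measurable
  qed
  then show ?thesis unfolding geo_sum_def case_prod_beta
    by (intro measurable_count_space_sum assms(1)) (auto simp: elem_def)
qed

lemma geo_sum_event_sigma:
  assumes "finite J" "J \<subseteq> J'"
  shows "{\<omega>\<in>space M. P (geo_sum J \<omega>)} \<in> sets (elem_sigma (xi_index J'))"
proof -
  note [measurable] = geo_sum_measurable[OF assms]
  have "{\<omega>\<in>space (elem_sigma (xi_index J')). P (geo_sum J \<omega>)} \<in> sets (elem_sigma (xi_index J'))"
    by measurable
  then show ?thesis by simp
qed

lemma geo_sum_event:
  assumes "finite J" "\<forall>(i, y)\<in>J. 1 \<le> i"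
  shows "{\<omega>\<in>space M. P (geo_sum J \<omega>)} \<in> events"
  using geo_sum_event_sigma[OF assms(1) order_refl] subalgebra_elem_sigma[OF xi_index_sub[OF assms(2)]]
  by (auto simp: subalgebra_def)

lemma geo_sum_distribution:
  assumes "finite J" "J \<noteq> {}" "\<forall>(i, y)\<in>J. 1 \<le> i"
  shows "prob {\<omega>\<in>space M. geo_sum J \<omega> = k}
           = real ((card J - 1 + k) choose k) * (2/3) ^ card J * (1/3) ^ k"
  using assms
proof (induction J arbitrary: k rule: finite_ne_induct)
  case (singleton q)
  then show ?case using geometric by (auto simp: geo_sum_def split: prod.splits)
next
  case (insert q J)
  obtain i0 y0 where q: "q = (i0, y0)" by force
  have J: "\<forall>(i, y)\<in>J. 1 \<le> i" and qJ: "\<forall>(i, y)\<in>{q}. 1 \<le> i" using insert.prems by auto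
  define m where "m = card J"
  have m: "1 \<le> m" "card (insert q J) = Suc m" using insert by (auto simp: m_def Suc_le_eq card_gt_0_iff)
  define A where "A l = {\<omega>\<in>space M. geo_sum {q} \<omega> = k - l} \<inter> {\<omega>\<in>space M. geo_sum J \<omega> = l}" for l
  have split: "{\<omega>\<in>space M. geo_sum (insert q J) \<omega> = k} = (\<Union>l\<in>{..k}. A l)"
    using insert.hyps by (auto simp: A_def geo_sum_def q)
  have prob_A: "prob (A l) = real ((m - 1 + l) choose l) * (2/3) ^ Suc m * (1/3) ^ k"
    if "l \<le> k" for l
  proof -
    have "prob (A l) = prob {\<omega>\<in>space M. geo_sum {q} \<omega> = k - l} * prob {\<omega>\<in>space M. geo_sum J \<omega> = l}"
      unfolding A_def
    proof (rule indep_elem_sigma[OF xi_index_disjoint xi_index_sub[OF qJ] xi_index_sub[OF J]])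
      show "{q} \<inter> J = {}" using insert.hyps by simp
    qed (use insert.hyps(1) in \<open>auto intro!: geo_sum_event_sigma\<close>)
    also have "\<dots> = 2/3 * (1/3) ^ (k - l) * (real ((m - 1 + l) choose l) * (2/3) ^ m * (1/3) ^ l)"
      using insert.IH[OF J] geometric qJ by (simp add: geo_sum_def q m_def)
    also have "\<dots> = real ((m - 1 + l) choose l) * (2/3) ^ Suc m * ((1/3) ^ (k - l) * (1/3) ^ l)"
      by (simp add: algebra_simps)
    also have "(1/3::real) ^ (k - l) * (1/3) ^ l = (1/3) ^ k"
      using that by (simp flip: power_add)
    finally show ?thesis .
  qed
  have "prob {\<omega>\<in>space M. geo_sum (insert q J) \<omega> = k} = (\<Sum>l\<le>k. prob (A l))"
  proof (unfold split, rule finite_measure_finite_Union)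
    show "A ` {..k} \<subseteq> events"
      using geo_sum_event[of "{q}" "\<lambda>v. v = k - l" for l] qJ
        geo_sum_event[OF insert.hyps(1) J, of "\<lambda>v. v = l" for l]
      unfolding A_def by blast
    show "disjoint_family_on A {..k}" by (auto simp: A_def disjoint_family_on_def)
  qed simp
  also have "\<dots> = (\<Sum>l\<le>k. real ((m - 1 + l) choose l) * ((2/3) ^ Suc m * (1/3) ^ k))"
    by (rule sum.cong) (simp_all add: prob_A)
  also have "\<dots> = (\<Sum>l\<le>k. real ((m - 1 + l) choose l)) * (2/3) ^ Suc m * (1/3) ^ k"
    by (simp only: sum_distrib_right mult.assoc)
  also have "(\<Sum>l\<le>k. real ((m - 1 + l) choose l)) = real (Suc (m - 1 + k) choose k)"
    by (simp only: of_nat_sum[symmetric] sum_choose_lower)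
  also have "Suc (m - 1 + k) = card (insert q J) - 1 + k" using m by simp
  finally show ?case using m by simp
qed

lemma geo_sum_pmf_le:
  assumes J: "finite J" "J \<noteq> {}" "\<forall>(i, y)\<in>J. 1 \<le> i"
  shows "prob {\<omega>\<in>space M. geo_sum J \<omega> = k} \<le> 8 / sqrt (card J)"
proof -
  define m where "m = card J"
  define p where "p k = prob {\<omega>\<in>space M. geo_sum J \<omega> = k}" for k
  have m: "1 \<le> m" using J by (simp add: m_def Suc_le_eq card_gt_0_iff)
  have p: "p k = real ((m - 1 + k) choose k) * (2/3) ^ m * (1/3) ^ k" for k
    unfolding p_def m_def by (rule geo_sum_distribution[OF J])
  have rec: "3 * (real k + 1) * p (Suc k) = (real k + real m) * p k" for k
    unfolding p by (rule negbin_recurrence[OF m])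
  have nonneg: "0 \<le> p k" for k by (simp add: p_def)
  have mass: "sum p {a..b} \<le> 1" for a b
  proof -
    have "sum p {a..b} = prob (\<Union>k\<in>{a..b}. {\<omega>\<in>space M. geo_sum J \<omega> = k})"
      unfolding p_def using geo_sum_event[OF J(1,3), of "\<lambda>v. v = k" for k]
      by (intro finite_measure_finite_Union[symmetric]) (auto simp: disjoint_family_on_def)
    then show ?thesis by simp
  qed
  show ?thesis
    using negbin_pmf_le[OF rec nonneg mass m] by (simp add: p_def m_def)
qed

lemma geo_sum_tie_le:
  assumes J1: "finite J1" "J1 \<noteq> {}" "\<forall>(i, y)\<in>J1. 1 \<le> i"
    and J2: "finite J2" "\<forall>(i, y)\<in>J2. 1 \<le> i" and disj: "J1 \<inter> J2 = {}"
  shows "prob {\<omega>\<in>space M. geo_sum J1 \<omega> = geo_sum J2 \<omega>} \<le> 8 / sqrt (card J1)"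
proof -
  define c where "c = 8 / sqrt (card J1)"
  define B where "B k = {\<omega>\<in>space M. geo_sum J1 \<omega> = k} \<inter> {\<omega>\<in>space M. geo_sum J2 \<omega> = k}" for k
  define C where "C k = {\<omega>\<in>space M. geo_sum J2 \<omega> = k}" for k
  have C_event: "C k \<in> events" for k
    unfolding C_def using geo_sum_event[OF J2, of "\<lambda>v. v = k"] .
  have B_event: "B k \<in> events" for k
    unfolding B_def
    using geo_sum_event[OF J1(1,3), of "\<lambda>v. v = k"] C_event[of k, unfolded C_def] by (rule sets.Int)
  have B: "(\<lambda>k. prob (B k)) sums prob (\<Union>k. B k)"
    using B_event by (intro finite_measure_UNION) (auto simp: disjoint_family_on_def B_def)
  have C: "(\<lambda>k. prob (C k)) sums prob (\<Union>k. C k)"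
    using C_event by (intro finite_measure_UNION) (auto simp: disjoint_family_on_def C_def)
  have "prob (B k) \<le> c * prob (C k)" for k
  proof -
    have "prob (B k) = prob {\<omega>\<in>space M. geo_sum J1 \<omega> = k} * prob (C k)"
      unfolding B_def C_def
      by (rule indep_elem_sigma[OF xi_index_disjoint[OF disj] xi_index_sub[OF J1(3)] xi_index_sub[OF J2(2)]
            geo_sum_event_sigma[OF J1(1) order_refl] geo_sum_event_sigma[OF J2(1) order_refl]])
    also have "\<dots> \<le> c * prob (C k)"
      using geo_sum_pmf_le[OF J1] by (intro mult_right_mono) (auto simp: c_def)
    finally show ?thesis .
  qed
  then have "prob (\<Union>k. B k) \<le> c * prob (\<Union>k. C k)"
    by (rule sums_le[OF _ B sums_mult[OF C, of c]])
  also have "\<dots> \<le> c" by (rule mult_left_le[OF prob_le_1]) (simp add: c_def)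
  also have "(\<Union>k. B k) = {\<omega>\<in>space M. geo_sum J1 \<omega> = geo_sum J2 \<omega>}" by (auto simp: B_def)
  finally show ?thesis by (simp add: c_def)
qed

definition skeleton :: "nat \<Rightarrow> 'a \<Rightarrow> (int \<times> int) list" where
  "skeleton N \<omega> = map (\<lambda>k. (Y k \<omega>, env f lam rho (Y k \<omega>) \<omega>)) [0..<N]"

lemma length_skeleton: "length (skeleton N \<omega>) = N"
  by (simp add: skeleton_def)

lemma skeleton_sites: "fst ` set (skeleton N \<omega>) = (\<lambda>k. Y k \<omega>) ` {..<N}"
  by (force simp: skeleton_def)

lemma skeleton_visits: "visits (skeleton N \<omega>) y = occ Y N y \<omega>"
  unfolding visits_def occ_def by (rule arg_cong[where f = card]) (auto simp: skeleton_def)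

lemma skeleton_sign: "(y, s) \<in> set (skeleton N \<omega>) \<Longrightarrow> s = env f lam rho y \<omega>"
  by (auto simp: skeleton_def)

lemma skeleton_measurable:
  "skeleton N \<in> elem_sigma skeleton_index \<rightarrow>\<^sub>M count_space UNIV"
proof -
  have [measurable]: "Y k \<in> elem_sigma skeleton_index \<rightarrow>\<^sub>M count_space UNIV" for k
    by (rule Y_measurable) (auto simp: skeleton_index_def)
  have [measurable]: "env f lam rho y \<in> elem_sigma skeleton_index \<rightarrow>\<^sub>M count_space UNIV" for y
    by (rule env_measurable) (auto simp: skeleton_index_def)
  have [measurable]: "(\<lambda>\<omega>. env f lam rho (Y k \<omega>) \<omega>) \<in> elem_sigma skeleton_index \<rightarrow>\<^sub>M count_space UNIV" for k
    by (rule measurable_compose_countable'[where I = UNIV]) auto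
  show ?thesis unfolding skeleton_def by (intro measurable_map_upt) measurable
qed

definition skeleton_sum :: "(int \<times> int) list \<Rightarrow> 'a \<Rightarrow> int" where
  "skeleton_sum d \<omega> = (\<Sum>y\<in>fst ` set d. env f lam rho y \<omega> * (\<Sum>i=1..visits d y. int (xi i y \<omega>)))"

lemma Xpos_skeleton_sum: "Xpos f Y xi lam rho N \<omega> = skeleton_sum (skeleton N \<omega>) \<omega>"
  by (simp add: Xpos_def skeleton_sum_def skeleton_sites skeleton_visits)

lemma Xpos_measurable: "Xpos f Y xi lam rho N \<in> M \<rightarrow>\<^sub>M count_space UNIV"
proof -
  have [measurable]: "skeleton N \<in> M \<rightarrow>\<^sub>M count_space UNIV"
    by (rule elem_sigma_measurable_M[OF skeleton_index_sub skeleton_measurable])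
  have [measurable]: "env f lam rho y \<in> M \<rightarrow>\<^sub>M count_space UNIV" for y
    by (rule elem_sigma_measurable_M[OF skeleton_index_sub env_measurable]) (auto simp: skeleton_index_def)
  note [measurable] = xi_measurable
  have [measurable]: "(\<lambda>\<omega>. \<Sum>i=1..n. int (xi i y \<omega>)) \<in> M \<rightarrow>\<^sub>M count_space UNIV" for n y
    by (rule measurable_count_space_sum) auto
  have [measurable]: "skeleton_sum d \<in> M \<rightarrow>\<^sub>M count_space UNIV" for d
    unfolding skeleton_sum_def[abs_def] by (rule measurable_count_space_sum) (simp, measurable)
  have "(\<lambda>\<omega>. skeleton_sum (skeleton N \<omega>) \<omega>) \<in> M \<rightarrow>\<^sub>M count_space UNIV"
    by (rule measurable_compose_countable'[where I = UNIV]) auto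
  then show ?thesis by (simp add: Xpos_skeleton_sum[abs_def])
qed

lemma Xpos_geo_sums:
  assumes d: "skeleton N \<omega> = d" and signs: "\<forall>(y, s)\<in>set d. s \<in> {1, -1}"
  shows "Xpos f Y xi lam rho N \<omega> = int (geo_sum (plus_slots d) \<omega>) - int (geo_sum (minus_slots d) \<omega>)"
proof -
  have "Xpos f Y xi lam rho N \<omega> = skeleton_sum d \<omega>" by (simp add: Xpos_skeleton_sum d)
  also have "\<dots> = (\<Sum>(i, y)\<in>plus_slots d. int (xi i y \<omega>)) - (\<Sum>(i, y)\<in>minus_slots d. int (xi i y \<omega>))"
    unfolding skeleton_sum_def using signs skeleton_sign[of _ _ N \<omega>] d
    by (intro signed_slot_sum) auto
  finally show ?thesis by (simp add: geo_sum_def case_prod_beta)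
qed

lemma env_sign:
  assumes "\<omega> \<in> space M" "rho y \<omega> \<in> {1, -1}"
  shows "env f lam rho y \<omega> \<in> {1, -1}"
proof -
  have "lam y \<omega> = 0 \<or> lam y \<omega> = 1" using lam01 assms(1) by auto
  then show ?thesis using f_sign assms(2) by (auto simp: env_def)
qed

lemma env_sign_AE: "AE \<omega> in M. \<forall>y. env f lam rho y \<omega> \<in> {1, -1}"
proof -
  have "AE \<omega> in M. rho y \<omega> \<in> {1, -1}" for y
  proof -
    note [measurable] = rho_measurable
    have "{\<omega>\<in>space M. rho y \<omega> \<in> {1, -1}} = {\<omega>\<in>space M. rho y \<omega> = 1} \<union> {\<omega>\<in>space M. rho y \<omega> = -1}"
      by auto
    also have "prob \<dots> = 1"
      using rho_plus[rule_format, of y] rho_minus[rule_format, of y] by (subst finite_measure_Union) auto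
    finally have "AE \<omega> in M. \<omega> \<in> {\<omega>\<in>space M. rho y \<omega> \<in> {1, -1}}" by (rule AE_prob_1)
    then show ?thesis by auto
  qed
  then have "AE \<omega> in M. \<forall>y. rho y \<omega> \<in> {1, -1}" by (simp add: AE_all_countable)
  with AE_space show ?thesis
  proof (eventually_elim, intro allI)
    fix \<omega> y assume "\<omega> \<in> space M" "\<forall>y. rho y \<omega> \<in> {1, -1}"
    then show "env f lam rho y \<omega> \<in> {1, -1}" by (intro env_sign) auto
  qed
qed

definition zero_event :: "nat \<Rightarrow> 'a set" where
  "zero_event N = {\<omega>\<in>space M. Xpos f Y xi lam rho N \<omega> = 0}"

lemma zero_event_in_events: "zero_event N \<in> events"
proof -
  note [measurable] = Xpos_measurable
  show ?thesis unfolding zero_event_def by measurable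
qed

definition tie_event :: "(int \<times> int) list \<Rightarrow> 'a set" where
  "tie_event d = {\<omega>\<in>space M. geo_sum (plus_slots d) \<omega> = geo_sum (minus_slots d) \<omega>}"

lemma tie_event_sigma: "tie_event d \<in> sets (elem_sigma (xi_index (slots d)))"
proof -
  have "plus_slots d \<subseteq> slots d" "minus_slots d \<subseteq> slots d"
    by (auto simp: plus_slots_def minus_slots_def)
  note [measurable] = geo_sum_measurable[OF slots_finite(2) this(1)] geo_sum_measurable[OF slots_finite(3) this(2)]
  have "{\<omega>\<in>space (elem_sigma (xi_index (slots d))).
      int (geo_sum (plus_slots d) \<omega>) - int (geo_sum (minus_slots d) \<omega>) = 0}
      \<in> sets (elem_sigma (xi_index (slots d)))" by measurable
  then show ?thesis by (simp add: tie_event_def)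
qed

(* For a skeleton of length 2n one of the two slot sets has at least n elements. *)
lemma tie_event_prob_le:
  assumes n: "1 \<le> n" and d: "length d = 2 * n"
  shows "prob (tie_event d) \<le> 8 / sqrt n"
proof -
  have card: "card (plus_slots d) + card (minus_slots d) = 2 * n"
    using card_plus_minus_slots d by simp
  have le: "8 / sqrt (card J) \<le> 8 / sqrt n" if "n \<le> card J" for J :: "(nat \<times> int) set"
    using that n by (intro divide_left_mono) auto
  show ?thesis
  proof (cases "n \<le> card (plus_slots d)")
    case True
    then have "plus_slots d \<noteq> {}" using n by auto
    then show ?thesis unfolding tie_event_def
      using geo_sum_tie_le[OF slots_finite(2) _ slots_pos(2) slots_finite(3) slots_pos(3)
          plus_minus_slots_disjoint] le[OF True] by fastforce
  next
    case False
    then have ge: "n \<le> card (minus_slots d)" using card by linarith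
    then have "minus_slots d \<noteq> {}" using n by auto
    moreover have "tie_event d = {\<omega>\<in>space M. geo_sum (minus_slots d) \<omega> = geo_sum (plus_slots d) \<omega>}"
      by (auto simp: tie_event_def)
    ultimately show ?thesis
      using geo_sum_tie_le[OF slots_finite(3) _ slots_pos(3) slots_finite(2) slots_pos(2)]
        plus_minus_slots_disjoint[of d] le[OF ge] by (fastforce simp: Int_commute)
  qed
qed

lemma skeleton_fibre_sigma:
  assumes A: "A \<in> sets (elem_sigma skeleton_index)"
  shows "A \<inter> skeleton N -` {d} \<in> sets (elem_sigma skeleton_index)"
proof -
  have "A \<inter> skeleton N -` {d} = A \<inter> (skeleton N -` {d} \<inter> space (elem_sigma skeleton_index))"
    using sets.sets_into_space[OF A] by auto
  then show ?thesis using measurable_sets[OF skeleton_measurable, of "{d}" N] A by auto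
qed

lemma zero_event_on_fibre:
  assumes S: "S \<subseteq> space M" "S \<subseteq> skeleton N -` {d}" and signs: "\<forall>(y, s)\<in>set d. s \<in> {1, -1}"
  shows "zero_event N \<inter> S = tie_event d \<inter> S"
  using Xpos_geo_sums[OF _ signs] S by (auto simp: zero_event_def tie_event_def)

lemma bad_fibre_null:
  assumes S: "S \<in> events" "S \<subseteq> skeleton N -` {d}"
    and bad: "(y, s) \<in> set d" "s \<notin> {1, -1}"
  shows "prob S = 0"
proof -
  have "AE \<omega> in M. \<omega> \<notin> S"
    using env_sign_AE
  proof eventually_elim
    fix \<omega> assume "\<forall>y. env f lam rho y \<omega> \<in> {1, -1}"
    then show "\<omega> \<notin> S" using skeleton_sign[of y s N \<omega>] bad S(2) by auto
  qed
  then show ?thesis using AE_iff_null_sets[OF S(1)] by (simp add: measure_eq_0_null_sets)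
qed

(* The key estimate: within a fibre of the skeleton and a skeleton event A, the event
   X_{2n} = 0 is the tie event, which is independent of the fibre and has probability
   <= 8 / sqrt n. *)
lemma zero_event_fibre_le:
  assumes n: "1 \<le> n" and A: "A \<in> sets (elem_sigma skeleton_index)"
  shows "prob (zero_event (2 * n) \<inter> A \<inter> skeleton (2 * n) -` {d})
           \<le> 8 / sqrt n * prob (A \<inter> skeleton (2 * n) -` {d})"
proof -
  define S where "S = A \<inter> skeleton (2 * n) -` {d}"
  have S_sigma: "S \<in> sets (elem_sigma skeleton_index)" unfolding S_def using A by (rule skeleton_fibre_sigma)
  then have S: "S \<in> events" using subalgebra_elem_sigma[OF skeleton_index_sub] by (auto simp: subalgebra_def)
  have S_fibre: "S \<subseteq> skeleton (2 * n) -` {d}" by (auto simp: S_def)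
  consider (empty) "S = {}" | (bad) y s where "(y, s) \<in> set d" "s \<notin> {1, -1}"
    | (good) "\<forall>(y, s)\<in>set d. s \<in> {1, -1}" "S \<noteq> {}" by blast
  then have "prob (zero_event (2 * n) \<inter> S) \<le> 8 / sqrt n * prob S"
  proof cases
    case empty
    then show ?thesis by simp
  next
    case bad
    then have "prob S = 0" by (intro bad_fibre_null[OF S S_fibre])
    then show ?thesis using finite_measure_mono[of "zero_event (2 * n) \<inter> S" S] S by simp
  next
    case good
    then obtain \<omega>0 where "\<omega>0 \<in> S" by blast
    then have len: "length d = 2 * n" using length_skeleton S_fibre by auto
    have "prob (zero_event (2 * n) \<inter> S) = prob (tie_event d \<inter> S)"
      using zero_event_on_fibre[OF sets.sets_into_space[OF S] S_fibre good(1)] by simp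
    also have "\<dots> = prob (tie_event d) * prob S"
      by (rule indep_elem_sigma[OF xi_index_skeleton_index xi_index_sub[OF slots_pos(1)]
            skeleton_index_sub tie_event_sigma S_sigma])
    also have "\<dots> \<le> 8 / sqrt n * prob S"
      using tie_event_prob_le[OF n len] by (intro mult_right_mono) auto
    finally show ?thesis .
  qed
  then show ?thesis by (simp add: S_def Int_assoc)
qed

lemma zero_event_inter_le:
  assumes n: "1 \<le> n" and A: "A \<in> sets (elem_sigma skeleton_index)"
  shows "prob (zero_event (2 * n) \<inter> A) \<le> 8 / sqrt n * prob A"
proof (rule prob_le_by_countable_partition)
  show "skeleton (2 * n) \<in> M \<rightarrow>\<^sub>M count_space UNIV"
    by (rule elem_sigma_measurable_M[OF skeleton_index_sub skeleton_measurable])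
  show "A \<in> events" using A subalgebra_elem_sigma[OF skeleton_index_sub] by (auto simp: subalgebra_def)
  then show "zero_event (2 * n) \<inter> A \<in> events" using zero_event_in_events by auto
  show "prob (zero_event (2 * n) \<inter> A \<inter> skeleton (2 * n) -` {d})
          \<le> 8 / sqrt n * prob (A \<inter> skeleton (2 * n) -` {d})" for d
    using zero_event_fibre_le[OF n A] .
qed simp

lemma sets_FG_skeleton: "sets (FG M Y lam rho) \<subseteq> sets (elem_sigma skeleton_index)"
proof -
  let ?G = "{Y k -` A \<inter> space M | k A. True} \<union> {lam y -` A \<inter> space M | y A. True}
      \<union> {rho y -` A \<inter> space M | y A. True}"
  have Y: "Y k \<in> elem_sigma skeleton_index \<rightarrow>\<^sub>M count_space UNIV" for k
    by (rule Y_measurable) (auto simp: skeleton_index_def)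
  have lam: "lam y \<in> elem_sigma skeleton_index \<rightarrow>\<^sub>M count_space UNIV" for y
    using elem_measurable[of "Lam y" skeleton_index] by (simp add: skeleton_index_def elem_def[abs_def])
  have rho: "rho y \<in> elem_sigma skeleton_index \<rightarrow>\<^sub>M count_space UNIV" for y
    using elem_measurable[of "Rho y" skeleton_index] by (simp add: skeleton_index_def elem_def[abs_def])
  have "?G \<subseteq> sets (elem_sigma skeleton_index)"
    using measurable_sets[OF Y] measurable_sets[OF lam] measurable_sets[OF rho] by auto
  then have "sigma_sets (space M) ?G \<subseteq> sets (elem_sigma skeleton_index)"
    using sets.sigma_sets_subset[of ?G "elem_sigma skeleton_index"] by simp
  moreover have "?G \<subseteq> Pow (space M)" by auto
  ultimately show ?thesis unfolding FG_def by (simp add: sets_measure_of)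
qed

lemma space_FG: "space (FG M Y lam rho) = space M"
  unfolding FG_def by (rule space_measure_of) auto

lemma cond_prob_zero_le:
  assumes "1 \<le> n"
  shows "AE \<omega> in M. real_cond_exp M (FG M Y lam rho) (indicator (zero_event (2 * n))) \<omega> \<le> 8 / sqrt n"
proof (rule cond_exp_indicator_le[OF _ zero_event_in_events])
  show "subalgebra M (FG M Y lam rho)"
    using sets_FG_skeleton subalgebra_elem_sigma[OF skeleton_index_sub] space_FG
    unfolding subalgebra_def by blast
  show "prob (zero_event (2 * n) \<inter> A) \<le> 8 / sqrt n * prob A" if "A \<in> sets (FG M Y lam rho)" for A
    by (rule zero_event_inter_le[OF assms]) (use sets_FG_skeleton that in blast)
qed

end

lemma inverse_sqrt_le_sqrt_ln:
  fixes n :: nat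
  assumes "3 \<le> n"
  shows "8 / sqrt n \<le> 8 * sqrt (ln n / n)"
proof -
  have "ln 3 \<le> ln (real n)" using assms by simp
  then have "1 \<le> ln (real n)" using ln3_gt_1 by linarith
  then have "1 / sqrt n \<le> sqrt (ln n) / sqrt n" using assms by (intro divide_right_mono) auto
  then show ?thesis by (simp add: real_sqrt_divide)
qed

theorem lemma5:
  fixes M :: "'a measure"
    and Y :: "nat \<Rightarrow> 'a \<Rightarrow> int"
    and xi :: "nat \<Rightarrow> int \<Rightarrow> 'a \<Rightarrow> nat"
    and lam rho :: "int \<Rightarrow> 'a \<Rightarrow> int"
    and f :: "int \<Rightarrow> int"
    and Q :: nat and \<beta> c0 \<delta>1 \<delta>2 \<delta>3 :: real
  assumes "prob_space M"
    \<comment> \<open>deterministic part of the environment\<close>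
    and "Q \<ge> 2" and "even Q"
    and "\<forall>y. f y \<in> {-1, 1}" and "\<forall>y. f (y + int Q) = f y"
    and "(\<Sum>y=1..int Q. f y) = 0"
    and "\<beta> > 0"
    \<comment> \<open>mutual independence of walk increments, xi's, lambda's, rho's\<close>
    and "prob_space.indep_vars M (\<lambda>_. count_space UNIV) (elem Y xi lam rho) elem_index"
    \<comment> \<open>simple symmetric random walk started at 0\<close>
    and "\<forall>\<omega>\<in>space M. Y 0 \<omega> = 0"
    and "\<forall>k. measure M {\<omega>\<in>space M. Y (Suc k) \<omega> - Y k \<omega> = 1} = 1/2"
    and "\<forall>k. measure M {\<omega>\<in>space M. Y (Suc k) \<omega> - Y k \<omega> = -1} = 1/2"
    \<comment> \<open>geometric variables\<close>
    and "\<forall>i y k. 1 \<le> i \<longrightarrow> measure M {\<omega>\<in>space M. xi i y \<omega> = k} = 2/3 * (1/3) ^ k"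
    \<comment> \<open>environment variables\<close>
    and "\<forall>y. measure M {\<omega>\<in>space M. rho y \<omega> = 1} = 1/2"
    and "\<forall>y. measure M {\<omega>\<in>space M. rho y \<omega> = -1} = 1/2"
    and "\<forall>y. \<forall>\<omega>\<in>space M. lam y \<omega> \<in> {0, 1}"
    and "\<exists>N. \<forall>y. N \<le> \<bar>y\<bar> \<longrightarrow>
           measure M {\<omega>\<in>space M. lam y \<omega> = 1} = c0 * real_of_int \<bar>y\<bar> powr (-\<beta>)"
    and "\<delta>1 > 0" and "\<delta>2 > 0" and "\<delta>3 > 0"
  shows "\<exists>C::real. \<exists>n0. \<forall>n\<ge>n0. AE \<omega> in M.
           ((\<forall>k\<le>2*n. real_of_int \<bar>Y k \<omega>\<bar> < real n powr (1/2 + \<delta>1))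
            \<and> (\<forall>y. real (occ Y (2*n) y \<omega>) < real n powr (1/2 + \<delta>2))
            \<and> \<not> (real_of_int \<bar>\<Sum>y\<in>(\<lambda>k. Y k \<omega>) ` {..<2*n}.
                       env f lam rho y \<omega> * int (occ Y (2*n) y \<omega>)\<bar>
                   > real n powr (1/2 + \<delta>3)))
           \<longrightarrow> real_cond_exp M (FG M Y lam rho)
                 (indicator {\<omega>\<in>space M. Xpos f Y xi lam rho (2*n) \<omega> = 0}) \<omega>
               \<le> C * sqrt (ln (real n) / real n)"
proof -
  interpret rhd_model M Y xi lam rho f
    using assms by (simp add: rhd_model_def rhd_model_axioms_def)
  have bound: "AE \<omega> in M. real_cond_exp M (FG M Y lam rho)
                 (indicator {\<omega>\<in>space M. Xpos f Y xi lam rho (2*n) \<omega> = 0}) \<omega>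
               \<le> 8 * sqrt (ln (real n) / real n)" if n: "3 \<le> n" for n :: nat
  proof -
    have "AE \<omega> in M. real_cond_exp M (FG M Y lam rho) (indicator (zero_event (2 * n))) \<omega> \<le> 8 / sqrt n"
      using n by (intro cond_prob_zero_le) simp
    then show ?thesis unfolding zero_event_def
      by eventually_elim (use inverse_sqrt_le_sqrt_ln[OF n] in linarith)
  qed
  show ?thesis
    by (intro exI[of _ 8] exI[of _ 3] allI impI eventually_mono[OF bound]) auto
qed

end
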